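(* Let $\mathbf P=UV^\top$ be the transition matrix of a Markov chain on $\{1,\dots,p\}$ with stationary distribution $\pi$ having all entries positive, where $U,V\in\mathbb R^{p\times r}$ are entrywise nonnegative with $U\mathbf 1_r=\mathbf 1_p$, $V^\top\mathbf 1_p=\mathbf 1_r$, each meta-state has an anchor state, and $\mathrm{rank}(U)=r$. Let $\mathbf h_1,\dots,\mathbf h_r$ be the right singular vectors of $\mathbf Q=\mathrm{diag}(\pi)\mathbf P[\mathrm{diag}(\pi)]^{-1/2}$ associated with its nonzero singular values $\sigma_1\ge\dots\ge\sigma_r$, and assume $\mathbf h_1$ has all coordinates positive. Let $\mathbf D=[\mathrm{diag}(\mathbf h_1)]^{-1}[\mathbf h_2,\dots,\mathbf h_r]\in\mathbb R^{p\times(r-1)}$. Then there exists a simplex $\mathcal S_0^*\subset\mathbb R^{r-1}$ with $r$ vertices $\mathbf b_1,\dots,\mathbf b_r$ such that all rows of $\mathbf D$ are contained in this simplex. Furthermore, for all anchor states $j$ of a same meta-state, the $j$-th row of $\mathbf D$ falls exactly onto one vertex of this simplex.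
   Context: A state $j$ is an anchor state of meta-state $k$ if $V_{jk}>0$ and $V_{js}=0$ for all $s\neq k$. *)

theory Defs
  imports "Jordan_Normal_Form.DL_Rank"
begin

definition diag_of_vec :: "real vec \<Rightarrow> real mat" where
  "diag_of_vec v = mat (dim_vec v) (dim_vec v) (\<lambda>(i,j). if i = j then v $ i else 0)"

definition nonneg_mat :: "real mat \<Rightarrow> bool" where
  "nonneg_mat A \<longleftrightarrow> (\<forall>i<dim_row A. \<forall>j<dim_col A. A $$ (i,j) \<ge> 0)"

definition transition_mat :: "nat \<Rightarrow> real mat \<Rightarrow> bool" where
  "transition_mat p P \<longleftrightarrow> P \<in> carrier_mat p p \<and> nonneg_mat P \<and>
     (\<forall>i<p. (\<Sum>j<p. P $$ (i,j)) = 1)"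

definition stationary_dist :: "nat \<Rightarrow> real mat \<Rightarrow> real vec \<Rightarrow> bool" where
  "stationary_dist p P \<pi> \<longleftrightarrow> \<pi> \<in> carrier_vec p \<and> (\<forall>i<p. \<pi> $ i \<ge> 0) \<and>
     (\<Sum>i<p. \<pi> $ i) = 1 \<and> transpose_mat P *\<^sub>v \<pi> = \<pi>"

definition anchor_state :: "real mat \<Rightarrow> nat \<Rightarrow> nat \<Rightarrow> bool" where
  "anchor_state V j k \<longleftrightarrow> j < dim_row V \<and> k < dim_col V \<and> V $$ (j,k) > 0 \<and>
     (\<forall>s<dim_col V. s \<noteq> k \<longrightarrow> V $$ (j,s) = 0)"

definition right_singular_vector :: "real mat \<Rightarrow> real \<Rightarrow> real vec \<Rightarrow> bool" where
  "right_singular_vector Q \<sigma> h \<longleftrightarrow> h \<in> carrier_vec (dim_col Q) \<and> h \<bullet> h = 1 \<and>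
     (\<exists>u \<in> carrier_vec (dim_row Q). u \<bullet> u = 1 \<and> Q *\<^sub>v h = \<sigma> \<cdot>\<^sub>v u \<and>
        transpose_mat Q *\<^sub>v u = \<sigma> \<cdot>\<^sub>v h)"

(* b 0, ..., b (r-1) are the r vertices of a simplex in R^d (affinely independent) *)
definition simplex_vertices :: "nat \<Rightarrow> nat \<Rightarrow> (nat \<Rightarrow> real vec) \<Rightarrow> bool" where
  "simplex_vertices d r b \<longleftrightarrow> (\<forall>k<r. b k \<in> carrier_vec d) \<and>
     (\<forall>c::nat \<Rightarrow> real. (\<Sum>k<r. c k) = 0 \<and> (\<forall>i<d. (\<Sum>k<r. c k * b k $ i) = 0)
         \<longrightarrow> (\<forall>k<r. c k = 0))"

definition in_simplex :: "nat \<Rightarrow> nat \<Rightarrow> (nat \<Rightarrow> real vec) \<Rightarrow> real vec \<Rightarrow> bool" where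
  "in_simplex d r b x \<longleftrightarrow> x \<in> carrier_vec d \<and>
     (\<exists>w::nat \<Rightarrow> real. (\<forall>k<r. w k \<ge> 0) \<and> (\<Sum>k<r. w k) = 1 \<and>
        (\<forall>i<d. x $ i = (\<Sum>k<r. w k * b k $ i)))"

end

theory Submission
  imports Defs
begin

(* Since \<sigma>_k \<noteq> 0, the right singular vector h_k lies in the range of
   Q^T = diag(\<pi>)^(-1/2) V U^T diag(\<pi>), so h_k = diag(\<pi>)^(-1/2) V c_k for some c_k in R^r,
   and orthonormality of h_1, ..., h_r makes the r x r coefficient matrix C = (c_k(s)) nonsingular.
   Dividing by h_1 cancels diag(\<pi>)^(-1/2): row j of D is the convex combination, with weights
   proportional to V_js c_1(s) \<ge> 0, of the points b_s = (c_2(s), ..., c_r(s)) / c_1(s).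
   At an anchor state j of s the row of V is supported on s, so row j of D is exactly b_s; this
   also gives c_1(s) > 0 from h_1 > 0. Nonsingularity of C makes the b_s affinely independent. *)

lemma dim_diag_of_vec [simp]:
  "dim_row (diag_of_vec v) = dim_vec v" "dim_col (diag_of_vec v) = dim_vec v"
  by (simp_all add: diag_of_vec_def)

lemma index_diag_of_vec [simp]:
  "i < dim_vec v \<Longrightarrow> j < dim_vec v \<Longrightarrow> diag_of_vec v $$ (i,j) = (if i = j then v $ i else 0)"
  by (simp add: diag_of_vec_def)

lemma diag_of_vec_scaling_index:
  assumes M: "M \<in> carrier_mat n n" and v: "v \<in> carrier_vec n" and i: "i < n" and j: "j < n"
  shows "(diag_of_vec v * M * mat n n (\<lambda>(i,j). if i = j then f i else 0)) $$ (i,j)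
           = v $ i * M $$ (i,j) * f j"
  using M v i j by (simp add: scalar_prod_def sum_distrib_left if_distrib[of "\<lambda>x. x * _"]
      if_distrib[of "\<lambda>x. _ * x"] cong: if_cong)

lemma right_singular_vector_in_transpose_range:
  assumes "right_singular_vector Q \<sigma> h" and "\<sigma> \<noteq> 0"
  shows "\<exists>x \<in> carrier_vec (dim_row Q). h = transpose_mat Q *\<^sub>v x"
proof -
  obtain u where u: "u \<in> carrier_vec (dim_row Q)" "transpose_mat Q *\<^sub>v u = \<sigma> \<cdot>\<^sub>v h"
    and h: "h \<in> carrier_vec (dim_col Q)"
    using assms(1) unfolding right_singular_vector_def by blast
  have "transpose_mat Q *\<^sub>v ((1 / \<sigma>) \<cdot>\<^sub>v u) = h"
    using u h assms(2) by (simp add: mult_mat_vec[of _ "dim_col Q" "dim_row Q"] smult_smult_assoc)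
  then show ?thesis using u(1) by (metis smult_carrier_vec)
qed

lemma right_singular_vector_in_scaled_col_space:
  assumes U: "U \<in> carrier_mat p r" and V: "V \<in> carrier_mat p r" and \<pi>: "\<pi> \<in> carrier_vec p"
    and Q_def: "Q = diag_of_vec \<pi> * (U * transpose_mat V) *
                  mat p p (\<lambda>(i,j). if i = j then 1 / sqrt (\<pi> $ i) else 0)"
    and sv: "right_singular_vector Q \<sigma> h" and "\<sigma> \<noteq> 0"
  shows "\<exists>c. \<forall>j<p. h $ j = (\<Sum>s<r. V $$ (j,s) * c s) / sqrt (\<pi> $ j)"
proof -
  have UV: "U * transpose_mat V \<in> carrier_mat p p" using U V by simp
  have Q: "Q \<in> carrier_mat p p" using UV \<pi> unfolding Q_def by (auto simp: diag_of_vec_def)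
  obtain x where x: "x \<in> carrier_vec p" and h: "h = transpose_mat Q *\<^sub>v x"
    using right_singular_vector_in_transpose_range[OF sv \<open>\<sigma> \<noteq> 0\<close>] Q by auto
  define c where "c s = (\<Sum>i<p. \<pi> $ i * U $$ (i,s) * x $ i)" for s
  have "h $ j = (\<Sum>s<r. V $$ (j,s) * c s) / sqrt (\<pi> $ j)" if j: "j < p" for j
  proof -
    have "h $ j = (\<Sum>i<p. Q $$ (i,j) * x $ i)"
      using h x Q j by (simp add: scalar_prod_def lessThan_atLeast0)
    also have "\<dots> = (\<Sum>i<p. \<Sum>s<r. \<pi> $ i * U $$ (i,s) * x $ i * V $$ (j,s) / sqrt (\<pi> $ j))"
      using U V j Q_def
      by (intro sum.cong) (simp_all add: diag_of_vec_scaling_index[OF UV \<pi>] scalar_prod_def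
            lessThan_atLeast0 sum_distrib_left sum_distrib_right sum_divide_distrib mult_ac)
    also have "\<dots> = (\<Sum>s<r. V $$ (j,s) * c s) / sqrt (\<pi> $ j)"
      by (subst sum.swap) (simp add: c_def sum_distrib_left sum_divide_distrib mult_ac)
    finally show ?thesis .
  qed
  then show ?thesis by blast
qed

lemma orthonormal_lincomb_eq_zero:
  fixes h :: "nat \<Rightarrow> 'a :: comm_ring_1 vec"
  assumes h: "\<forall>l<r. h l \<in> carrier_vec p"
    and orth: "\<forall>k<r. \<forall>l<r. h k \<bullet> h l = (if k = l then 1 else 0)"
    and comb: "\<forall>j<p. (\<Sum>l<r. x l * h l $ j) = 0"
    and m: "m < r"
  shows "x m = 0"
proof -
  have "(\<Sum>l<r. x l * (h m \<bullet> h l)) = (\<Sum>l<r. if l = m then x m else 0)"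
    using orth m by (intro sum.cong) auto
  then have "x m = (\<Sum>l<r. x l * (h m \<bullet> h l))"
    using m by simp
  also have "\<dots> = (\<Sum>l<r. \<Sum>j<p. h m $ j * (x l * h l $ j))"
    using h by (intro sum.cong) (auto simp: scalar_prod_def lessThan_atLeast0 sum_distrib_left mult_ac)
  also have "\<dots> = (\<Sum>j<p. h m $ j * (\<Sum>l<r. x l * h l $ j))"
    by (subst sum.swap) (simp add: sum_distrib_left)
  also have "\<dots> = 0" using comb by simp
  finally show ?thesis .
qed

lemma coefficients_independent_if_orthonormal:
  fixes h :: "nat \<Rightarrow> real vec"
  assumes h: "\<forall>l<r. h l \<in> carrier_vec p"
    and orth: "\<forall>k<r. \<forall>l<r. h k \<bullet> h l = (if k = l then 1 else 0)"
    and h_c: "\<forall>l<r. \<forall>j<p. h l $ j = (\<Sum>s<n. A j s * c l s) / a j"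
    and x: "\<forall>s<n. (\<Sum>l<r. x l * c l s) = 0"
  shows "\<forall>l<r. x l = 0"
proof -
  have "(\<Sum>l<r. x l * h l $ j) = 0" if "j < p" for j
  proof -
    have "(\<Sum>l<r. x l * h l $ j) = (\<Sum>l<r. \<Sum>s<n. x l * A j s * c l s / a j)"
      using h_c that by (simp add: sum_distrib_left sum_divide_distrib mult_ac)
    also have "\<dots> = (\<Sum>s<n. A j s * (\<Sum>l<r. x l * c l s) / a j)"
      by (subst sum.swap) (simp add: sum_distrib_left sum_divide_distrib mult_ac)
    finally show ?thesis using x by simp
  qed
  then show ?thesis using orthonormal_lincomb_eq_zero[OF h orth] by blast
qed

lemma square_columns_independent_if_rows_independent:
  fixes c :: "nat \<Rightarrow> nat \<Rightarrow> 'a :: idom"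
  assumes rows: "\<And>x. \<forall>s<n. (\<Sum>l<n. x l * c l s) = 0 \<Longrightarrow> \<forall>l<n. x l = 0"
    and cols: "\<forall>l<n. (\<Sum>s<n. c l s * y s) = 0"
  shows "\<forall>s<n. y s = 0"
proof -
  define C where "C = mat n n (\<lambda>(l,s). c l s)"
  have C: "C \<in> carrier_mat n n" by (simp add: C_def)
  have "det (transpose_mat C) \<noteq> 0"
  proof
    assume "det (transpose_mat C) = 0"
    then obtain v where v: "v \<in> carrier_vec n" "v \<noteq> 0\<^sub>v n" "transpose_mat C *\<^sub>v v = 0\<^sub>v n"
      using det_0_iff_vec_prod_zero[of "transpose_mat C" n] C by auto
    have "\<forall>s<n. (\<Sum>l<n. v $ l * c l s) = 0"
    proof (intro allI impI)
      fix s assume "s < n"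
      then have "(transpose_mat C *\<^sub>v v) $ s = 0" using v(3) by simp
      then show "(\<Sum>l<n. v $ l * c l s) = 0"
        using v(1) \<open>s < n\<close> by (simp add: C_def scalar_prod_def lessThan_atLeast0 mult.commute)
    qed
    then have "v = 0\<^sub>v n" using rows[of "\<lambda>l. v $ l"] v(1) by (intro eq_vecI) auto
    with v(2) show False ..
  qed
  then have "det C \<noteq> 0" using det_transpose[OF C] by simp
  moreover have "C *\<^sub>v vec n y = 0\<^sub>v n"
    using cols by (intro eq_vecI) (simp_all add: C_def scalar_prod_def lessThan_atLeast0)
  ultimately have "vec n y = 0\<^sub>v n" using det_0_iff_vec_prod_zero[OF C] vec_carrier by blast
  then show ?thesis by (metis index_vec index_zero_vec(1))
qed

lemma right_singular_vectors_coefficients: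
  assumes U: "U \<in> carrier_mat p r" and V: "V \<in> carrier_mat p r" and \<pi>: "\<pi> \<in> carrier_vec p"
    and Q_def: "Q = diag_of_vec \<pi> * (U * transpose_mat V) *
                  mat p p (\<lambda>(i,j). if i = j then 1 / sqrt (\<pi> $ i) else 0)"
    and sv: "\<forall>k<r. right_singular_vector Q (\<sigma> k) (h k)" and \<sigma>: "\<forall>k<r. \<sigma> k \<noteq> 0"
    and orth: "\<forall>k<r. \<forall>l<r. h k \<bullet> h l = (if k = l then 1 else 0)"
  obtains c where "\<forall>k<r. \<forall>j<p. h k $ j = (\<Sum>s<r. V $$ (j,s) * c k s) / sqrt (\<pi> $ j)"
    and "\<And>y. \<forall>l<r. (\<Sum>s<r. c l s * y s) = 0 \<Longrightarrow> \<forall>s<r. y s = 0"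
proof -
  have "\<forall>k<r. \<exists>c. \<forall>j<p. h k $ j = (\<Sum>s<r. V $$ (j,s) * c s) / sqrt (\<pi> $ j)"
    using right_singular_vector_in_scaled_col_space[OF U V \<pi> Q_def] sv \<sigma> by blast
  then obtain c where h_c: "\<forall>k<r. \<forall>j<p. h k $ j = (\<Sum>s<r. V $$ (j,s) * c k s) / sqrt (\<pi> $ j)"
    by metis
  have "\<forall>k<r. h k \<in> carrier_vec p"
    using sv unfolding right_singular_vector_def Q_def by simp
  then have rows: "\<And>x. \<forall>s<r. (\<Sum>l<r. x l * c l s) = 0 \<Longrightarrow> \<forall>l<r. x l = 0"
    using coefficients_independent_if_orthonormal[OF _ orth h_c] by blast
  show ?thesis
    using h_c square_columns_independent_if_rows_independent[OF rows] by (rule that)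
qed

lemma anchor_state_sum:
  assumes "anchor_state V j k" and "V \<in> carrier_mat p r"
  shows "(\<Sum>s<r. V $$ (j,s) * f s) = V $$ (j,k) * f k"
proof -
  have "k < r" using assms by (auto simp: anchor_state_def)
  have "(\<Sum>s<r. V $$ (j,s) * f s) = (\<Sum>s<r. if s = k then V $$ (j,k) * f k else 0)"
    using assms by (intro sum.cong) (auto simp: anchor_state_def)
  also have "\<dots> = V $$ (j,k) * f k" using \<open>k < r\<close> by simp
  finally show ?thesis .
qed

(* Normalisation by the leading coordinate, as in D = diag(h_1)^(-1) [h_2, ..., h_r]. *)
definition ratio_vec :: "nat \<Rightarrow> (nat \<Rightarrow> real) \<Rightarrow> real vec" where
  "ratio_vec d y = vec d (\<lambda>i. y (Suc i) / y 0)"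

lemma ratio_vec_cong_scale:
  assumes "\<forall>l\<le>d. y l = a * z l" and "a \<noteq> 0"
  shows "ratio_vec d y = ratio_vec d z"
  using assms by (intro eq_vecI) (simp_all add: ratio_vec_def)

lemma ratio_vec_in_simplex:
  assumes v: "\<forall>s<r. 0 \<le> v s" and c0: "\<forall>s<r. 0 < c 0 s" and S: "0 < (\<Sum>s<r. v s * c 0 s)"
  shows "in_simplex d r (\<lambda>s. ratio_vec d (\<lambda>l. c l s)) (ratio_vec d (\<lambda>l. \<Sum>s<r. v s * c l s))"
proof -
  define w where "w s = v s * c 0 s / (\<Sum>s<r. v s * c 0 s)" for s
  have "\<forall>s<r. 0 \<le> w s" using v c0 S by (auto simp: w_def less_imp_le)
  moreover have "(\<Sum>s<r. w s) = 1" using S by (simp add: w_def flip: sum_divide_distrib)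
  moreover have "ratio_vec d (\<lambda>l. \<Sum>s<r. v s * c l s) $ i = (\<Sum>s<r. w s * ratio_vec d (\<lambda>l. c l s) $ i)"
    if "i < d" for i
    using that c0 by (auto simp: ratio_vec_def w_def sum_divide_distrib intro!: sum.cong)
  ultimately show ?thesis unfolding in_simplex_def by (auto simp: ratio_vec_def)
qed

lemma ratio_vec_sum_single:
  fixes v :: "nat \<Rightarrow> real"
  assumes "k < r" and "\<forall>s<r. s \<noteq> k \<longrightarrow> v s = 0" and "v k \<noteq> 0"
  shows "ratio_vec d (\<lambda>l. \<Sum>s<r. v s * c l s) = ratio_vec d (\<lambda>l. c l k)"
proof -
  have "(\<Sum>s<r. v s * c l s) = v k * c l k" for l
  proof -
    have "(\<Sum>s<r. v s * c l s) = (\<Sum>s<r. if s = k then v k * c l k else 0)"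
      using assms(2) by (intro sum.cong) auto
    also have "\<dots> = v k * c l k" using assms(1) by simp
    finally show ?thesis .
  qed
  then show ?thesis using assms(3) by (intro ratio_vec_cong_scale) auto
qed

lemma ratio_vec_simplex_vertices:
  assumes r: "r \<le> Suc d" and c0: "\<forall>s<r. c 0 s \<noteq> 0"
    and cols: "\<And>y. \<forall>l<r. (\<Sum>s<r. c l s * y s) = 0 \<Longrightarrow> \<forall>s<r. y s = 0"
  shows "simplex_vertices d r (\<lambda>s. ratio_vec d (\<lambda>l. c l s))"
  unfolding simplex_vertices_def
proof (intro conjI allI impI)
  fix w :: "nat \<Rightarrow> real" and k
  assume w: "(\<Sum>s<r. w s) = 0 \<and> (\<forall>i<d. (\<Sum>s<r. w s * ratio_vec d (\<lambda>l. c l s) $ i) = 0)"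
    and k: "k < r"
  have "(\<Sum>s<r. c l s * (w s / c 0 s)) = 0" if l: "l < r" for l
  proof (cases l)
    case 0
    have "(\<Sum>s<r. c l s * (w s / c 0 s)) = (\<Sum>s<r. w s)"
      using c0 0 by (intro sum.cong) auto
    then show ?thesis using w by simp
  next
    case (Suc i)
    then have "(\<Sum>s<r. c l s * (w s / c 0 s)) = (\<Sum>s<r. w s * ratio_vec d (\<lambda>l. c l s) $ i)"
      using l r by (intro sum.cong) (auto simp: ratio_vec_def)
    then show ?thesis using w Suc l r by simp
  qed
  then have "w k / c 0 k = 0" using cols[of "\<lambda>s. w s / c 0 s"] k by blast
  then show "w k = 0" using c0 k by simp
qed (simp add: ratio_vec_def)

lemma anchored_ratio_rows_in_simplex:
  assumes V: "V \<in> carrier_mat p r" and nonneg: "nonneg_mat V"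
    and anchors: "\<forall>k<r. \<exists>j. anchor_state V j k"
    and S_pos: "\<forall>j<p. 0 < (\<Sum>s<r. V $$ (j,s) * c 0 s)"
    and c_indep: "\<And>y. \<forall>l<r. (\<Sum>s<r. c l s * y s) = 0 \<Longrightarrow> \<forall>s<r. y s = 0"
  defines "b \<equiv> \<lambda>k. ratio_vec (r - 1) (\<lambda>l. c l k)"
    and "x \<equiv> \<lambda>j. ratio_vec (r - 1) (\<lambda>l. \<Sum>s<r. V $$ (j,s) * c l s)"
  shows "simplex_vertices (r - 1) r b \<and> (\<forall>j<p. in_simplex (r - 1) r b (x j)) \<and>
         (\<forall>k<r. \<forall>j. anchor_state V j k \<longrightarrow> x j = b k)"
proof (intro conjI allI impI)
  have anchor_row: "j < p" "0 < V $$ (j,k)" if "anchor_state V j k" for j k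
    using that V by (auto simp: anchor_state_def)
  have c0: "\<forall>k<r. 0 < c 0 k"
  proof (intro allI impI)
    fix k assume "k < r"
    then obtain j where j: "anchor_state V j k" using anchors by blast
    then have "0 < V $$ (j,k) * c 0 k"
      using S_pos anchor_row(1)[OF j] anchor_state_sum[OF j V] by metis
    then show "0 < c 0 k" using anchor_row(2)[OF j] by (simp add: zero_less_mult_iff)
  qed
  show "simplex_vertices (r - 1) r b"
    unfolding b_def
  proof (rule ratio_vec_simplex_vertices[OF _ _ c_indep])
    show "\<forall>s<r. c 0 s \<noteq> 0" using c0 by (simp add: less_imp_neq[symmetric])
  qed simp
  show "in_simplex (r - 1) r b (x j)" if "j < p" for j
    unfolding b_def x_def
    by (rule ratio_vec_in_simplex) (use nonneg V c0 S_pos that in \<open>auto simp: nonneg_mat_def\<close>)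
  show "x j = b k" if "k < r" and "anchor_state V j k" for k j
    unfolding b_def x_def
    by (rule ratio_vec_sum_single) (use that V in \<open>auto simp: anchor_state_def\<close>)
qed

theorem mainTheorem14:
  fixes p r :: nat
    and U V P Q D :: "real mat"
    and \<pi> :: "real vec"
    and h :: "nat \<Rightarrow> real vec"
    and \<sigma> :: "nat \<Rightarrow> real"
  assumes U: "U \<in> carrier_mat p r" and V: "V \<in> carrier_mat p r"
    and nonnegU: "nonneg_mat U" and nonnegV: "nonneg_mat V"
    and U1: "U *\<^sub>v vec r (\<lambda>_. 1) = vec p (\<lambda>_. 1)"
    and V1: "transpose_mat V *\<^sub>v vec p (\<lambda>_. 1) = vec r (\<lambda>_. 1)"
    and P_def: "P = U * transpose_mat V"
    and transP: "transition_mat p P"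
    and stat: "stationary_dist p P \<pi>"
    and pi_pos: "\<forall>i<p. \<pi> $ i > 0"
    and anchors: "\<forall>k<r. \<exists>j. anchor_state V j k"
    and rankU: "vec_space.rank p U = r"
    and Q_def: "Q = diag_of_vec \<pi> * P *
                  mat p p (\<lambda>(i,j). if i = j then 1 / sqrt (\<pi> $ i) else 0)"
    and sv_pos: "\<forall>k<r. \<sigma> k > 0"
    and sv_ord: "\<forall>k l. k \<le> l \<and> l < r \<longrightarrow> \<sigma> l \<le> \<sigma> k"
    and h_sv: "\<forall>k<r. right_singular_vector Q (\<sigma> k) (h k)"
    and h_orth: "\<forall>k<r. \<forall>l<r. k \<noteq> l \<longrightarrow> h k \<bullet> h l = 0"
    and h1_pos: "\<forall>j<p. h 0 $ j > 0"
    and D_def: "D = mat p (r - 1) (\<lambda>(j,i). h (i + 1) $ j / h 0 $ j)"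
  shows "\<exists>b. simplex_vertices (r - 1) r b \<and>
            (\<forall>j<p. in_simplex (r - 1) r b (row D j)) \<and>
            (\<forall>k<r. \<forall>j. anchor_state V j k \<longrightarrow> row D j = b k)"
proof -
  have \<pi>: "\<pi> \<in> carrier_vec p" using stat by (simp add: stationary_dist_def)
  have \<sigma>: "\<forall>k<r. \<sigma> k \<noteq> 0" using sv_pos by force
  have orth: "\<forall>k<r. \<forall>l<r. h k \<bullet> h l = (if k = l then 1 else 0)"
    using h_sv h_orth by (simp add: right_singular_vector_def)
  obtain c
    where h_c: "\<forall>k<r. \<forall>j<p. h k $ j = (\<Sum>s<r. V $$ (j,s) * c k s) / sqrt (\<pi> $ j)"
      and c_indep: "\<And>y. \<forall>l<r. (\<Sum>s<r. c l s * y s) = 0 \<Longrightarrow> \<forall>s<r. y s = 0"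
    using right_singular_vectors_coefficients[OF U V \<pi> Q_def[unfolded P_def] h_sv \<sigma> orth] by blast
  have r: "0 < r" if "j < p" for j
  proof (rule ccontr)
    assume "\<not> 0 < r"
    then have "(U *\<^sub>v vec r (\<lambda>_. 1)) $ j = 0" using U that by (simp add: scalar_prod_def)
    then show False using U1 that by simp
  qed
  have row_D: "row D j = ratio_vec (r - 1) (\<lambda>l. \<Sum>s<r. V $$ (j,s) * c l s)" if "j < p" for j
  proof -
    have "row D j = ratio_vec (r - 1) (\<lambda>l. h l $ j)"
      using that by (intro eq_vecI) (simp_all add: D_def ratio_vec_def)
    also have "\<dots> = ratio_vec (r - 1) (\<lambda>l. \<Sum>s<r. V $$ (j,s) * c l s)"
      using h_c that r[OF that] pi_pos by (intro ratio_vec_cong_scale[where a = "1 / sqrt (\<pi> $ j)"]) auto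
    finally show ?thesis .
  qed
  have S_pos: "\<forall>j<p. 0 < (\<Sum>s<r. V $$ (j,s) * c 0 s)"
  proof (intro allI impI)
    fix j assume j: "j < p"
    have "0 < (\<Sum>s<r. V $$ (j,s) * c 0 s) / sqrt (\<pi> $ j)"
      using h1_pos h_c r[OF j] j by metis
    then show "0 < (\<Sum>s<r. V $$ (j,s) * c 0 s)"
      using pi_pos[rule_format, OF j] by (simp add: zero_less_divide_iff)
  qed
  have anchor_row: "j < p" if "anchor_state V j k" for j k
    using that V by (simp add: anchor_state_def)
  show ?thesis
    using anchored_ratio_rows_in_simplex[where c = c, OF V nonnegV anchors S_pos c_indep]
    by (intro exI[of _ "\<lambda>k. ratio_vec (r - 1) (\<lambda>l. c l k)"]) (simp add: row_D anchor_row)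
qed

end
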